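(* Let $f\in\mathbb{Z}_2[z]$ with $f(0)=1$ and $\deg f=n$. Then $P_f\le 4^n$.
   Context: $\mathbb{Z}_2$ is the two-element field. For $f\in\mathbb{Z}_2[z]$ with $f(0)=1$ and $\deg f=n$, let $V_f$ be the set of polynomials in $\mathbb{Z}_2[z]$ of degree less than $n$ (including $0$), and let $\sigma_0,\sigma_1:V_f\to V_f$ be the maps $\sigma_0(g)=(gz)\bmod f$ and $\sigma_1(g)=(gz+1)\bmod f$, where $h\bmod f$ is the remainder of $h$ upon division by $f$; these are bijections since $f(0)=1$. Let $G_f$ be the permutation group on $V_f$ generated by $\sigma_0,\sigma_1$, and $P_f=|G_f|$. (Equivalently, $\sigma_0,\sigma_1$ are the transition maps of the division-by-$f$ automaton on states $V_f$ with transitions $g\xrightarrow{b}(gz+b)\bmod f$; every word $u\in\{0,1\}^*$ labels, from any state, a path returning to it after reading $u^{P_f}$.) *)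

theory Defs
  imports "HOL-Computational_Algebra.Polynomial" "HOL-Library.Z2" "HOL-Library.FuncSet"
begin

text \<open>States of the division-by-f automaton: polynomials of degree less than deg f (including 0).\<close>
definition V :: "bit poly \<Rightarrow> bit poly set" where
  "V f = {g. g = 0 \<or> degree g < degree f}"

definition sigma :: "bit poly \<Rightarrow> bit \<Rightarrow> bit poly \<Rightarrow> bit poly" where
  "sigma f b g = (g * [:0, 1:] + [:b:]) mod f"

definition word_map :: "bit poly \<Rightarrow> bit list \<Rightarrow> bit poly \<Rightarrow> bit poly" where
  "word_map f u = fold (sigma f) u"

text \<open>The group G_f generated by sigma_0, sigma_1: the smallest set of permutations of V f
  (represented as functions restricted to V f, i.e. undefined outside) containing the
  identity and the generators and closed under composition and inverses.\<close>
inductive_set G :: "bit poly \<Rightarrow> (bit poly \<Rightarrow> bit poly) set" for f where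
  G_id: "restrict id (V f) \<in> G f"
| G_gen: "restrict (sigma f b) (V f) \<in> G f"
| G_comp: "p \<in> G f \<Longrightarrow> q \<in> G f \<Longrightarrow> restrict (p \<circ> q) (V f) \<in> G f"
| G_inv: "p \<in> G f \<Longrightarrow> restrict (inv_into (V f) p) (V f) \<in> G f"

definition P :: "bit poly \<Rightarrow> nat" where
  "P f = card (G f)"

end

theory Submission
  imports Defs
begin

text \<open>Every element of \<open>G f\<close> acts on \<open>V f\<close> as an affine map \<open>g \<mapsto> (a g + h) mod f\<close> with
  \<open>a\<close> invertible modulo \<open>f\<close>: the generators have this form with \<open>a = z\<close>, which is invertible
  because \<open>f(0) = 1\<close>, and such maps are closed under composition and inversion. An affine map
  only depends on the residues of \<open>a\<close> and \<open>h\<close>, so there are at most \<open>|V f|\<^sup>2 \<le> 4\<^sup>n\<close> of them.\<close>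

lemma bounded_degree_polys_subset_Poly:
  "{g :: 'a::zero poly. g = 0 \<or> degree g < n} \<subseteq> Poly ` {xs. set xs \<subseteq> UNIV \<and> length xs = n}"
proof
  fix g :: "'a poly" assume "g \<in> {g. g = 0 \<or> degree g < n}"
  then have "length (coeffs g) \<le> n" by (cases "g = 0") (auto simp: length_coeffs)
  then show "g \<in> Poly ` {xs. set xs \<subseteq> UNIV \<and> length xs = n}"
    by (intro image_eqI[of _ _ "coeffs g @ replicate (n - length (coeffs g)) 0"]) auto
qed

lemma
  assumes "finite (UNIV :: 'a set)"
  shows finite_bounded_degree_polys: "finite {g :: 'a::zero poly. g = 0 \<or> degree g < n}"
    and card_bounded_degree_polys_le:
      "card {g :: 'a poly. g = 0 \<or> degree g < n} \<le> card (UNIV :: 'a set) ^ n"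
proof -
  have fin: "finite {xs :: 'a list. set xs \<subseteq> UNIV \<and> length xs = n}"
    using assms by (rule finite_lists_length_eq)
  then show "finite {g :: 'a poly. g = 0 \<or> degree g < n}"
    by (rule finite_subset[OF bounded_degree_polys_subset_Poly finite_imageI])
  have "card {g :: 'a poly. g = 0 \<or> degree g < n}
      \<le> card (Poly ` {xs :: 'a list. set xs \<subseteq> UNIV \<and> length xs = n})"
    using fin by (intro card_mono finite_imageI bounded_degree_polys_subset_Poly)
  also have "\<dots> \<le> card (UNIV :: 'a set) ^ n"
    using card_image_le[OF fin, of Poly] card_lists_length_eq[OF assms] by simp
  finally show "card {g :: 'a poly. g = 0 \<or> degree g < n} \<le> card (UNIV :: 'a set) ^ n" .
qed

lemma UNIV_bit: "(UNIV :: bit set) = {0, 1}"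
  using bit_not_zero_iff by auto

lemma finite_V: "finite (V f)"
  unfolding V_def by (rule finite_bounded_degree_polys) (simp add: UNIV_bit)

lemma card_V_le: "card (V f) \<le> 2 ^ degree f"
proof -
  have fin: "finite (UNIV :: bit set)" and "card (UNIV :: bit set) = 2"
    by (simp_all add: UNIV_bit)
  then show ?thesis using card_bounded_degree_polys_le[OF fin, of "degree f"] by (simp add: V_def)
qed

lemma mod_in_V: "f \<noteq> 0 \<Longrightarrow> g mod f \<in> V f"
  using degree_mod_less[of f g] by (auto simp: V_def)

lemma mod_V_eq: "g \<in> V f \<Longrightarrow> g mod f = g"
  using mod_poly_less by (auto simp: V_def)

definition affine_map :: "bit poly \<Rightarrow> bit poly \<Rightarrow> bit poly \<Rightarrow> bit poly \<Rightarrow> bit poly" where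
  "affine_map f a h = restrict (\<lambda>g. (a * g + h) mod f) (V f)"

definition affine_maps :: "bit poly \<Rightarrow> (bit poly \<Rightarrow> bit poly) set" where
  "affine_maps f = {affine_map f a h | a h. \<exists>a'. a * a' mod f = 1 mod f}"

lemma affine_map_cong:
  assumes "a mod f = c mod f" "h mod f = d mod f"
  shows "affine_map f a h = affine_map f c d"
proof -
  have "(a * g + h) mod f = (c * g + d) mod f" for g
    by (metis assms mod_add_cong mod_mult_cong)
  then show ?thesis by (simp add: affine_map_def)
qed

lemma affine_map_in_V: "f \<noteq> 0 \<Longrightarrow> g \<in> V f \<Longrightarrow> affine_map f a h g \<in> V f"
  by (simp add: affine_map_def mod_in_V)

lemma affine_map_one_zero: "affine_map f 1 0 = restrict id (V f)"
  by (auto simp: affine_map_def mod_V_eq)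

lemma restrict_sigma_eq_affine_map: "restrict (sigma f b) (V f) = affine_map f [:0, 1:] [:b:]"
  by (auto simp: affine_map_def sigma_def mult.commute)

lemma affine_map_comp:
  assumes "f \<noteq> 0"
  shows "restrict (affine_map f a h \<circ> affine_map f c d) (V f) = affine_map f (a * c) (a * d + h)"
proof -
  have "(a * ((c * g + d) mod f) + h) mod f = (a * c * g + (a * d + h)) mod f" for g
  proof -
    have "(a * ((c * g + d) mod f) + h) mod f = (a * (c * g + d) + h) mod f"
      by (metis mod_add_cong mod_mult_right_eq)
    then show ?thesis by (simp add: algebra_simps)
  qed
  then show ?thesis using \<open>f \<noteq> 0\<close> by (auto simp: affine_map_def mod_in_V)
qed

lemma affine_map_inverse:
  assumes "f \<noteq> 0" and inverse: "a * a' mod f = 1 mod f"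
  shows "restrict (inv_into (V f) (affine_map f a h)) (V f) = affine_map f a' (- (a' * h))"
proof -
  let ?p = "affine_map f a h" and ?q = "affine_map f a' (- (a' * h))"
  have "h mod f = a * a' * h mod f"
    by (metis inverse mod_mult_left_eq mult_1)
  then have "(a * - (a' * h) + h) mod f = 0 mod f"
    by (simp add: mod_eq_dvd_iff algebra_simps)
  then have p_q_id: "restrict (?p \<circ> ?q) (V f) = affine_map f 1 0"
    unfolding affine_map_comp[OF \<open>f \<noteq> 0\<close>] by (rule affine_map_cong[OF inverse])
  have p_q: "?p (?q y) = y" if "y \<in> V f" for y
    using fun_cong[OF p_q_id, of y] that by (simp add: affine_map_one_zero)
  have "a' * a mod f = 1 mod f" "(a' * h + - (a' * h)) mod f = 0 mod f"
    using inverse by (simp_all add: mult.commute)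
  then have q_p_id: "restrict (?q \<circ> ?p) (V f) = affine_map f 1 0"
    unfolding affine_map_comp[OF \<open>f \<noteq> 0\<close>] by (rule affine_map_cong)
  have "?q (?p x) = x" if "x \<in> V f" for x
    using fun_cong[OF q_p_id, of x] that by (simp add: affine_map_one_zero)
  then have "inj_on ?p (V f)"
    by (metis inj_onI)
  then have "inv_into (V f) ?p y = ?q y" if "y \<in> V f" for y
    using that by (intro inv_into_f_eq affine_map_in_V p_q \<open>f \<noteq> 0\<close>)
  then show ?thesis
    by (auto simp: affine_map_def)
qed

lemma indeterminate_invertible_mod:
  fixes f :: "'a::field poly"
  assumes "poly f 0 \<noteq> 0"
  shows "\<exists>a'. [:0, 1:] * a' mod f = 1 mod f"
proof -
  obtain c q where f: "f = pCons c q" by (cases f)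
  then have "c \<noteq> 0" using assms by simp
  then have "[:0, 1:] * smult (- inverse c) q = 1 + [:- inverse c:] * f"
    by (simp add: f one_pCons)
  then have "[:0, 1:] * smult (- inverse c) q mod f = 1 mod f"
    by (simp only: mod_mult_self1)
  then show ?thesis ..
qed

lemma G_subset_affine_maps:
  assumes "poly f 0 = 1"
  shows "G f \<subseteq> affine_maps f"
proof
  have "f \<noteq> 0" using assms by auto
  fix p assume "p \<in> G f"
  then show "p \<in> affine_maps f"
  proof induction
    case G_id
    have "1 * 1 mod f = 1 mod f" by simp
    then show ?case
      unfolding affine_maps_def affine_map_one_zero[symmetric] by blast
  next
    case (G_gen b)
    have "\<exists>a'. [:0, 1:] * a' mod f = 1 mod f"
      using assms by (intro indeterminate_invertible_mod) simp
    then show ?case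
      unfolding affine_maps_def restrict_sigma_eq_affine_map by blast
  next
    case (G_comp p q)
    then obtain a h a' c d c' where p: "p = affine_map f a h" "a * a' mod f = 1 mod f"
      and q: "q = affine_map f c d" "c * c' mod f = 1 mod f"
      by (auto simp: affine_maps_def)
    have "a * c * (a' * c') mod f = (a * a') * (c * c') mod f"
      by (simp add: ac_simps)
    also have "\<dots> = 1 mod f"
      using mod_mult_cong[OF p(2) q(2)] by simp
    finally have "a * c * (a' * c') mod f = 1 mod f" .
    then show ?case
      by (auto simp: affine_maps_def p q affine_map_comp[OF \<open>f \<noteq> 0\<close>])
  next
    case (G_inv p)
    then obtain a h a' where p: "p = affine_map f a h" "a * a' mod f = 1 mod f"
      by (auto simp: affine_maps_def)
    then have "a' * a mod f = 1 mod f"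
      by (simp add: mult.commute)
    then show ?case
      by (auto simp: affine_maps_def p affine_map_inverse[OF \<open>f \<noteq> 0\<close> p(2)])
  qed
qed

lemma affine_maps_subset_image:
  assumes "f \<noteq> 0"
  shows "affine_maps f \<subseteq> (\<lambda>(a, h). affine_map f a h) ` (V f \<times> V f)"
proof
  fix p assume "p \<in> affine_maps f"
  then obtain a h where "p = affine_map f a h"
    unfolding affine_maps_def by blast
  also have "\<dots> = affine_map f (a mod f) (h mod f)"
    by (rule affine_map_cong) simp_all
  finally show "p \<in> (\<lambda>(a, h). affine_map f a h) ` (V f \<times> V f)"
    using mod_in_V[OF assms] by (intro rev_image_eqI[of "(a mod f, h mod f)"]) simp_all
qed

lemma finite_affine_maps: "f \<noteq> 0 \<Longrightarrow> finite (affine_maps f)"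
  by (rule finite_subset[OF affine_maps_subset_image]) (simp_all add: finite_V)

lemma card_affine_maps_le:
  assumes "f \<noteq> 0"
  shows "card (affine_maps f) \<le> card (V f) ^ 2"
proof -
  have "card (affine_maps f) \<le> card ((\<lambda>(a, h). affine_map f a h) ` (V f \<times> V f))"
    by (intro card_mono finite_imageI finite_cartesian_product finite_V affine_maps_subset_image assms)
  also have "\<dots> \<le> card (V f \<times> V f)"
    by (rule card_image_le) (simp add: finite_V)
  finally show ?thesis
    by (simp add: card_cartesian_product power2_eq_square)
qed

theorem mainTheorem15:
  fixes f :: "bit poly"
  assumes "poly f 0 = 1"
  shows "P f \<le> 4 ^ degree f"
proof -
  have "f \<noteq> 0" using assms by auto
  have "P f \<le> card (affine_maps f)"
    unfolding P_def using finite_affine_maps[OF \<open>f \<noteq> 0\<close>] G_subset_affine_maps[OF assms]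
    by (rule card_mono)
  also have "\<dots> \<le> card (V f) ^ 2"
    using \<open>f \<noteq> 0\<close> by (rule card_affine_maps_le)
  also have "\<dots> \<le> (2 ^ degree f) ^ 2"
    using card_V_le by (rule power_mono) simp
  also have "\<dots> = 4 ^ degree f"
    by (simp add: power2_eq_square power_mult_distrib[symmetric])
  finally show ?thesis .
qed

end
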